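(* There is an absolute constant $d$ such that for every $N\ge1$ and every randomized XOR decision tree that computes ${\rm MAJORITY}$ exactly on $N$-bit inputs, there exists an input $X\in\{0,1\}^N$ on which the expected number of queries made is at least $\frac23N-\sqrt{\frac{8N}{9\pi}}-d$.
   Context: For $X=X_0X_1\cdots X_{N-1}\in\{0,1\}^N$, ${\rm MAJORITY}(X)=0$ if $X$ contains more zeros than ones and ${\rm MAJORITY}(X)=1$ otherwise. An XOR decision tree on $N$-bit inputs is a deterministic adaptive algorithm that on input $X$ makes a sequence of queries, each either a single bit $X_i$ or $X_i\oplus X_j$ ($0\le i,j\le N-1$), each chosen depending on previous answers, and then outputs a value. A randomized XOR decision tree is a probability distribution over XOR decision trees. It computes $f$ exactly if on every input $X$ it outputs $f(X)$ with probability $1$. *)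

theory Defs
  imports "HOL-Probability.Probability"
begin

text \<open>Inputs are bit strings X = X_0 ... X_{N-1}, represented as bool lists of
length N (True = 1, False = 0).\<close>

definition majority :: "bool list \<Rightarrow> bool" where
  "majority X = (if length (filter Not X) > length (filter id X) then False else True)"

datatype query = Bit nat | Xor nat nat

fun answer :: "query \<Rightarrow> bool list \<Rightarrow> bool" where
  "answer (Bit i) X = X ! i"
| "answer (Xor i j) X = (X ! i \<noteq> X ! j)"

fun query_ok :: "nat \<Rightarrow> query \<Rightarrow> bool" where
  "query_ok N (Bit i) = (i < N)"
| "query_ok N (Xor i j) = (i < N \<and> j < N)"

datatype xtree = Leaf bool | Node query xtree xtree

fun valid_tree :: "nat \<Rightarrow> xtree \<Rightarrow> bool" where
  "valid_tree N (Leaf b) = True"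
| "valid_tree N (Node q t0 t1) = (query_ok N q \<and> valid_tree N t0 \<and> valid_tree N t1)"

fun run :: "xtree \<Rightarrow> bool list \<Rightarrow> bool" where
  "run (Leaf b) X = b"
| "run (Node q t0 t1) X = (if answer q X then run t1 X else run t0 X)"

fun cost :: "xtree \<Rightarrow> bool list \<Rightarrow> nat" where
  "cost (Leaf b) X = 0"
| "cost (Node q t0 t1) X = Suc (if answer q X then cost t1 X else cost t0 X)"

text \<open>A randomized XOR decision tree on N-bit inputs is a probability distribution
over (valid) XOR decision trees; the type xtree is countable, so a pmf is fully general.\<close>
definition rand_computes_exactly :: "nat \<Rightarrow> xtree pmf \<Rightarrow> (bool list \<Rightarrow> bool) \<Rightarrow> bool" where
  "rand_computes_exactly N D f \<longleftrightarrow>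
     (\<forall>T\<in>set_pmf D. valid_tree N T) \<and>
     (\<forall>X. length X = N \<longrightarrow> measure_pmf.prob D {T. run T X = f X} = 1)"

definition expected_cost :: "xtree pmf \<Rightarrow> bool list \<Rightarrow> ennreal" where
  "expected_cost D X = (\<integral>\<^sup>+ T. ennreal (real (cost T X)) \<partial>measure_pmf D)"

end

theory Submission
  imports Defs
begin

text \<open>
  It suffices to bound the average cost of a deterministic tree over all inputs. We follow
  cubes: an input x together with a family of disjoint blocks of positions, the cube consisting
  of x with any union of blocks flipped. A query is either constant on such a cube or, after
  removing one block or merging two blocks, splits it into two cubes of half the size on each of
  which it is constant. The potential of a cube is its number of blocks with nonzero bias; one
  query lowers it by at most 3/2 on average, while at a leaf, where majority is constant on the
  cube, it is at most the mean of the absolute excess \<bar>#1 - #0\<bar>. Starting from the singleton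
  blocks at the all-zero input, the potential is N and the mean absolute excess is at most
  sqrt (2N/pi) + 1 by Wallis' product, so the average cost is at least 2/3 (N - sqrt (2N/pi) - 1).
\<close>

definition flip :: "nat set \<Rightarrow> bool list \<Rightarrow> bool list" where
  "flip U X = map (\<lambda>i. X ! i \<noteq> (i \<in> U)) [0..<length X]"

lemma length_flip [simp]: "length (flip U X) = length X"
  by (simp add: flip_def)

lemma nth_flip [simp]: "i < length X \<Longrightarrow> flip U X ! i = (X ! i \<noteq> (i \<in> U))"
  by (simp add: flip_def)

lemma flip_flip: "flip U (flip V X) = flip ((U - V) \<union> (V - U)) X"
  by (rule nth_equalityI) auto

lemma flip_flip_disjoint: "U \<inter> V = {} \<Longrightarrow> flip U (flip V X) = flip (U \<union> V) X"
  by (rule nth_equalityI) auto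

lemma flip_empty [simp]: "flip {} X = X"
  by (rule nth_equalityI) auto

definition spin :: "bool \<Rightarrow> int" where
  "spin b = (if b then 1 else -1)"

definition bias :: "nat set \<Rightarrow> bool list \<Rightarrow> int" where
  "bias C X = (\<Sum>i\<in>C. spin (X ! i))"

definition excess :: "bool list \<Rightarrow> int" where
  "excess X = bias {..<length X} X"

lemma excess_eq_card: "excess X = int (length (filter id X)) - int (length (filter Not X))"
proof -
  have "excess X = int (card ({..<length X} \<inter> {i. X ! i})) - int (card ({..<length X} \<inter> - {i. X ! i}))"
    unfolding excess_def bias_def spin_def by (simp add: sum.If_cases)
  moreover have "{..<length X} \<inter> {i. X ! i} = {i. i < length X \<and> id (X ! i)}"
    and "{..<length X} \<inter> - {i. X ! i} = {i. i < length X \<and> \<not> X ! i}"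
    by auto
  ultimately show ?thesis
    by (simp add: length_filter_conv_card)
qed

lemma majority_iff_excess: "majority X \<longleftrightarrow> 0 \<le> excess X"
  by (auto simp: majority_def excess_eq_card)

lemma bias_Un: "finite A \<Longrightarrow> finite B \<Longrightarrow> A \<inter> B = {} \<Longrightarrow> bias (A \<union> B) X = bias A X + bias B X"
  unfolding bias_def by (rule sum.union_disjoint)

lemma bias_flip:
  assumes "C \<subseteq> {..<length X}"
  shows "bias C (flip U X) = bias C X - 2 * bias (C \<inter> U) X"
proof -
  have fin: "finite C"
    using assms finite_subset by blast
  have "bias C (flip U X) = (\<Sum>i\<in>C. spin (X ! i) - (if i \<in> U then 2 * spin (X ! i) else 0))"
    unfolding bias_def using assms by (intro sum.cong) (auto simp: spin_def)
  also have "\<dots> = bias C X - 2 * bias (C \<inter> U) X"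
    unfolding bias_def using fin by (simp add: sum_subtractf sum.If_cases sum_distrib_left Int_def)
  finally show ?thesis .
qed

lemma bias_flip_disjoint: "C \<subseteq> {..<length X} \<Longrightarrow> C \<inter> U = {} \<Longrightarrow> bias C (flip U X) = bias C X"
  using bias_flip[of C X U] by (simp add: bias_def)

lemma excess_flip: "C \<subseteq> {..<length X} \<Longrightarrow> excess (flip C X) = excess X - 2 * bias C X"
  unfolding excess_def by (simp add: bias_flip Int_absorb1)

section \<open>Cubes spanned by disjoint blocks\<close>

definition block_family :: "nat \<Rightarrow> nat set set \<Rightarrow> bool" where
  "block_family N Cs \<longleftrightarrow> finite Cs \<and> disjoint Cs \<and> (\<forall>C\<in>Cs. C \<subseteq> {..<N})"

lemma block_family_subset: "block_family N Cs \<Longrightarrow> Cs' \<subseteq> Cs \<Longrightarrow> block_family N Cs'"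
  unfolding block_family_def by (meson finite_subset pairwise_subset subsetD)

lemma block_family_disjoint:
  "block_family N Cs \<Longrightarrow> A \<in> Cs \<Longrightarrow> B \<in> Cs \<Longrightarrow> A \<noteq> B \<Longrightarrow> A \<inter> B = {}"
  unfolding block_family_def pairwise_def disjnt_def by blast

lemma finite_block: "block_family N Cs \<Longrightarrow> C \<in> Cs \<Longrightarrow> finite C"
  unfolding block_family_def by (meson finite_lessThan finite_subset)

definition merge_blocks :: "nat set \<Rightarrow> nat set \<Rightarrow> nat set set \<Rightarrow> nat set set" where
  "merge_blocks C1 C2 Cs = insert (C1 \<union> C2) (Cs - {C1, C2})"

lemma block_family_merge_blocks:
  assumes "block_family N Cs" "C1 \<in> Cs" "C2 \<in> Cs"
  shows "block_family N (merge_blocks C1 C2 Cs)"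
proof -
  have "disjoint (Cs - {C1, C2})"
    using assms(1) unfolding block_family_def by (auto intro: pairwise_subset)
  moreover have "disjnt (C1 \<union> C2) B" if "B \<in> Cs - {C1, C2}" for B
    using that block_family_disjoint[OF assms(1)] assms(2,3) unfolding disjnt_def by blast
  ultimately show ?thesis
    using assms unfolding block_family_def merge_blocks_def
    by (auto simp: pairwise_insert disjnt_sym)
qed

text \<open>A multiset, since empty blocks produce repeated points.\<close>

definition cube :: "bool list \<Rightarrow> nat set set \<Rightarrow> bool list multiset" where
  "cube x Cs = image_mset (\<lambda>D. flip (\<Union>D) x) (mset_set (Pow Cs))"

lemma size_cube: "finite Cs \<Longrightarrow> size (cube x Cs) = 2 ^ card Cs"
  unfolding cube_def by (simp add: card_Pow)

lemma mem_cube: "finite Cs \<Longrightarrow> X \<in># cube x Cs \<longleftrightarrow> (\<exists>D\<subseteq>Cs. X = flip (\<Union>D) x)"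
  by (auto simp: cube_def)

lemma mset_set_Pow_insert:
  assumes "finite A" "a \<notin> A"
  shows "mset_set (Pow (insert a A)) = mset_set (Pow A) + image_mset (insert a) (mset_set (Pow A))"
proof -
  have "inj_on (insert a) (Pow A)"
    using assms(2) by (intro inj_onI) (metis Pow_iff insert_ident subsetD)
  then show ?thesis
    using assms by (auto simp: Pow_insert image_mset_mset_set intro!: mset_set_Union)
qed

lemma sum_Pow_insert:
  assumes "finite A" "a \<notin> A"
  shows "(\<Sum>U\<in>Pow (insert a A). f U) = (\<Sum>U\<in>Pow A. f U) + (\<Sum>U\<in>Pow A. f (insert a U))"
  unfolding sum_unfold_sum_mset mset_set_Pow_insert[OF assms] by (simp add: multiset.map_comp comp_def)

lemma cube_insert:
  assumes "finite Cs" "C \<notin> Cs" "\<forall>B\<in>Cs. B \<inter> C = {}"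
  shows "cube x (insert C Cs) = cube x Cs + cube (flip C x) Cs"
proof -
  have "mset_set (Pow (insert C Cs)) = mset_set (Pow Cs) + image_mset (insert C) (mset_set (Pow Cs))"
    using assms(1,2) by (rule mset_set_Pow_insert)
  moreover have "flip (\<Union>(insert C D)) x = flip (\<Union>D) (flip C x)" if "D \<subseteq> Cs" for D
    using that assms(3) by (subst flip_flip_disjoint) (auto simp: Un_commute)
  ultimately show ?thesis
    unfolding cube_def using assms(1) by (auto simp: multiset.map_comp intro!: image_mset_cong)
qed

lemma cube_remove:
  assumes "block_family N Cs" "C \<in> Cs"
  shows "cube x Cs = cube x (Cs - {C}) + cube (flip C x) (Cs - {C})"
proof -
  have "Cs = insert C (Cs - {C})"
    using assms(2) by blast
  then show ?thesis
    using cube_insert[of "Cs - {C}" C x] assms block_family_disjoint[OF assms(1) _ assms(2)]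
    by (metis Diff_iff block_family_def finite_Diff singletonI)
qed

lemma cube_merge_blocks:
  assumes fam: "block_family N Cs" and C1: "C1 \<in> Cs" and C2: "C2 \<in> Cs" and "C1 \<noteq> C2"
  shows "cube x Cs = cube x (merge_blocks C1 C2 Cs) + cube (flip C1 x) (merge_blocks C1 C2 Cs)"
proof -
  define R where "R = Cs - {C1, C2}"
  have fin: "finite R"
    using fam unfolding R_def block_family_def by simp
  have C12: "C1 \<inter> C2 = {}"
    using block_family_disjoint[OF fam C1 C2 \<open>C1 \<noteq> C2\<close>] .
  have R_disj: "B \<inter> C1 = {}" "B \<inter> C2 = {}" if "B \<in> R" for B
    using that block_family_disjoint[OF fam] C1 C2 unfolding R_def by blast+
  have "C1 \<union> C2 \<notin> R"
    using R_disj \<open>C1 \<noteq> C2\<close> by blast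
  have flips: "flip C2 (flip C1 x) = flip (C1 \<union> C2) x" "flip (C1 \<union> C2) (flip C1 x) = flip C2 x"
    using C12 by (auto simp: flip_flip_disjoint flip_flip Un_commute intro: arg_cong2[where f = flip])
  have ins: "cube y (insert C R) = cube y R + cube (flip C y) R"
    if "C \<notin> R" "\<forall>B\<in>R. B \<inter> C = {}" for C y
    using cube_insert[OF fin that] .
  have "Cs = insert C1 (insert C2 R)"
    using C1 C2 unfolding R_def by blast
  then have "cube x Cs = cube x (insert C2 R) + cube (flip C1 x) (insert C2 R)"
    using cube_insert[of "insert C2 R" C1 x] fin C12 R_disj \<open>C1 \<noteq> C2\<close>
    by (auto simp: R_def)
  also have "\<dots> = cube x R + cube (flip C2 x) R + (cube (flip C1 x) R + cube (flip C2 (flip C1 x)) R)"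
    using ins[of C2] R_disj unfolding R_def by auto
  also have "\<dots> = cube x (insert (C1 \<union> C2) R) + cube (flip C1 x) (insert (C1 \<union> C2) R)"
    using ins[of "C1 \<union> C2"] R_disj \<open>C1 \<union> C2 \<notin> R\<close> flips by (simp add: Int_Un_distrib)
  finally show ?thesis
    unfolding merge_blocks_def R_def .
qed

definition unbalanced :: "nat set set \<Rightarrow> bool list \<Rightarrow> nat" where
  "unbalanced Cs x = card {C \<in> Cs. bias C x \<noteq> 0}"

lemma unbalanced_insert:
  assumes "finite Cs" "C \<notin> Cs"
  shows "unbalanced (insert C Cs) x = unbalanced Cs x + of_bool (bias C x \<noteq> 0)"
proof -
  have "{B \<in> insert C Cs. bias B x \<noteq> 0} =
      (if bias C x \<noteq> 0 then insert C {B \<in> Cs. bias B x \<noteq> 0} else {B \<in> Cs. bias B x \<noteq> 0})"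
    by auto
  then show ?thesis
    using assms by (simp add: unbalanced_def)
qed

lemma unbalanced_flip:
  assumes "\<forall>B\<in>Cs. B \<subseteq> {..<length x} \<and> B \<inter> C = {}"
  shows "unbalanced Cs (flip C x) = unbalanced Cs x"
proof -
  have "bias B (flip C x) = bias B x" if "B \<in> Cs" for B
    using assms that by (simp add: bias_flip_disjoint)
  then have "{B \<in> Cs. bias B (flip C x) \<noteq> 0} = {B \<in> Cs. bias B x \<noteq> 0}"
    by auto
  then show ?thesis
    by (simp add: unbalanced_def)
qed

lemma unbalanced_remove:
  assumes fam: "block_family (length x) Cs" and C: "C \<in> Cs"
  shows "2 * unbalanced Cs x \<le> 3 + unbalanced (Cs - {C}) x + unbalanced (Cs - {C}) (flip C x)"
proof -
  have "finite (Cs - {C})"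
    using fam by (simp add: block_family_def)
  then have "unbalanced Cs x \<le> unbalanced (Cs - {C}) x + 1"
    using unbalanced_insert[of "Cs - {C}" C x] C by (simp add: insert_absorb)
  moreover have "unbalanced (Cs - {C}) (flip C x) = unbalanced (Cs - {C}) x"
    using block_family_disjoint[OF fam _ C] fam
    by (intro unbalanced_flip) (auto simp: block_family_def)
  ultimately show ?thesis
    by linarith
qed

lemma unbalanced_merge_blocks:
  assumes fam: "block_family (length x) Cs" and C1: "C1 \<in> Cs" and C2: "C2 \<in> Cs" and "C1 \<noteq> C2"
  defines "M \<equiv> merge_blocks C1 C2 Cs"
  shows "2 * unbalanced Cs x \<le> 3 + unbalanced M x + unbalanced M (flip C1 x)"
proof -
  define R where "R = Cs - {C1, C2}"
  have fin: "finite R"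
    using fam by (simp add: R_def block_family_def)
  have sub: "C1 \<subseteq> {..<length x}" "C2 \<subseteq> {..<length x}"
    using fam C1 C2 by (auto simp: block_family_def)
  have C12: "C1 \<inter> C2 = {}"
    using block_family_disjoint[OF fam C1 C2 \<open>C1 \<noteq> C2\<close>] .
  have R_disj: "B \<inter> C1 = {}" "B \<inter> C2 = {}" if "B \<in> R" for B
    using that block_family_disjoint[OF fam] C1 C2 unfolding R_def by blast+
  have notin: "C1 \<union> C2 \<notin> R"
    using R_disj \<open>C1 \<noteq> C2\<close> by blast
  have fin12: "finite C1" "finite C2"
    using sub finite_subset by blast+
  define e1 e2 where "e1 = bias C1 x" and "e2 = bias C2 x"
  have "unbalanced (insert C1 (insert C2 R)) x = unbalanced R x + of_bool (e1 \<noteq> 0) + of_bool (e2 \<noteq> 0)"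
    using fin \<open>C1 \<noteq> C2\<close> by (simp add: unbalanced_insert R_def e1_def e2_def)
  moreover have "insert C1 (insert C2 R) = Cs"
    using C1 C2 unfolding R_def by blast
  \<comment> \<open>the merged block has bias \<open>e1 + e2\<close> in one half and \<open>e2 - e1\<close> in the other\<close>
  moreover have "bias (C1 \<union> C2) x = e1 + e2"
    unfolding e1_def e2_def using fin12 C12 by (rule bias_Un)
  moreover have "bias (C1 \<union> C2) (flip C1 x) = e2 - e1"
    using sub C12 bias_Un[OF fin12 C12, of x] by (simp add: bias_flip Int_absorb2 e1_def e2_def)
  moreover have "unbalanced R (flip C1 x) = unbalanced R x"
    using R_disj fam unfolding R_def by (intro unbalanced_flip) (auto simp: block_family_def)
  ultimately show ?thesis
    unfolding M_def merge_blocks_def R_def[symmetric] using fin notin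
    by (auto simp: unbalanced_insert)
qed

section \<open>Queries on cubes\<close>

fun flips :: "query \<Rightarrow> nat set \<Rightarrow> bool" where
  "flips (Bit i) U = (i \<in> U)"
| "flips (Xor i j) U = ((i \<in> U) \<noteq> (j \<in> U))"

lemma answer_flip: "query_ok (length X) q \<Longrightarrow> answer q (flip U X) = (answer q X \<noteq> flips q U)"
  by (cases q) auto

definition query_fixed :: "nat set set \<Rightarrow> query \<Rightarrow> bool" where
  "query_fixed Cs q \<longleftrightarrow> (\<forall>C\<in>Cs. \<not> flips q C)"

lemma query_fixed_Union: "query_fixed Cs q \<Longrightarrow> D \<subseteq> Cs \<Longrightarrow> \<not> flips q (\<Union>D)"
  by (cases q) (auto simp: query_fixed_def)

lemma answer_cube:
  assumes "finite Cs" "query_fixed Cs q" "query_ok (length x) q" "X \<in># cube x Cs"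
  shows "answer q X = answer q x"
  using assms query_fixed_Union by (auto simp: mem_cube answer_flip)

lemma flips_disjoint_blocks:
  assumes "flips q A" "flips q B" "A \<inter> B = {}"
  shows "\<not> flips q (A \<union> B)" and "E \<inter> (A \<union> B) = {} \<Longrightarrow> \<not> flips q E"
  using assms by (cases q; auto)+

lemma query_cases:
  assumes disj: "disjoint Cs"
  obtains "query_fixed Cs q"
  | C where "C \<in> Cs" "query_fixed (Cs - {C}) q" "flips q C"
  | C1 C2 where "C1 \<in> Cs" "C2 \<in> Cs" "C1 \<noteq> C2" "query_fixed (merge_blocks C1 C2 Cs) q" "flips q C1"
proof (cases "query_fixed Cs q")
  case True
  then show thesis
    by (rule that(1))
next
  case False
  then obtain C1 where C1: "C1 \<in> Cs" "flips q C1"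
    by (auto simp: query_fixed_def)
  show thesis
  proof (cases "query_fixed (Cs - {C1}) q")
    case False
    then obtain C2 where C2: "C2 \<in> Cs" "C2 \<noteq> C1" "flips q C2"
      by (auto simp: query_fixed_def)
    have "C1 \<inter> C2 = {}" "\<forall>E\<in>Cs - {C1, C2}. E \<inter> (C1 \<union> C2) = {}"
      using disj C1 C2 unfolding pairwise_def disjnt_def by blast+
    then have "query_fixed (merge_blocks C1 C2 Cs) q"
      using flips_disjoint_blocks[OF C1(2) C2(3)] by (auto simp: query_fixed_def merge_blocks_def)
    then show thesis
      using that(3) C1 C2 by blast
  qed (use that(2) C1 in blast)
qed

lemma cube_split_by_query:
  assumes fam: "block_family N Cs" and len: "length x = N" and q: "query_ok N q"
    and "\<not> query_fixed Cs q"
  obtains Cs' x' where "block_family N Cs'" "length x' = N" "cube x Cs = cube x Cs' + cube x' Cs'"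
    "query_fixed Cs' q" "answer q x' = (\<not> answer q x)"
    "2 * unbalanced Cs x \<le> 3 + unbalanced Cs' x + unbalanced Cs' x'"
proof -
  have "disjoint Cs"
    using fam by (simp add: block_family_def)
  then show thesis
  proof (cases rule: query_cases[where q = q])
    case 1
    with \<open>\<not> query_fixed Cs q\<close> show thesis
      by contradiction
  next
    case (2 C)
    show thesis
    proof (rule that)
      show "block_family N (Cs - {C})"
        using fam by (rule block_family_subset) blast
      show "cube x Cs = cube x (Cs - {C}) + cube (flip C x) (Cs - {C})"
        using fam \<open>C \<in> Cs\<close> by (rule cube_remove)
      show "answer q (flip C x) = (\<not> answer q x)"
        using q len \<open>flips q C\<close> by (simp add: answer_flip)
      show "2 * unbalanced Cs x \<le> 3 + unbalanced (Cs - {C}) x + unbalanced (Cs - {C}) (flip C x)"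
        using fam len \<open>C \<in> Cs\<close> by (simp add: unbalanced_remove)
    qed (use len 2 in auto)
  next
    case (3 C1 C2)
    show thesis
    proof (rule that)
      show "block_family N (merge_blocks C1 C2 Cs)"
        using fam 3 by (simp add: block_family_merge_blocks)
      show "cube x Cs = cube x (merge_blocks C1 C2 Cs) + cube (flip C1 x) (merge_blocks C1 C2 Cs)"
        using fam 3 by (simp add: cube_merge_blocks)
      show "answer q (flip C1 x) = (\<not> answer q x)"
        using q len \<open>flips q C1\<close> by (simp add: answer_flip)
      show "2 * unbalanced Cs x \<le> 3 + unbalanced (merge_blocks C1 C2 Cs) x
          + unbalanced (merge_blocks C1 C2 Cs) (flip C1 x)"
        using fam len 3 by (simp add: unbalanced_merge_blocks)
    qed (use len 3 in auto)
  qed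
qed

section \<open>The cost invariant\<close>

lemma sum_excess_cube:
  assumes "block_family (length x) Cs"
  shows "(\<Sum>X\<in>#cube x Cs. excess X) = 2 ^ card Cs * (excess x - (\<Sum>C\<in>Cs. bias C x))"
proof -
  have "finite Cs"
    using assms by (simp add: block_family_def)
  then show ?thesis
    using assms
  proof (induction Cs arbitrary: x rule: finite_induct)
    case empty
    then show ?case
      by (simp add: cube_def)
  next
    case (insert C Cs)
    have fam: "block_family (length x) Cs"
      using insert.prems by (rule block_family_subset) blast
    have C: "C \<subseteq> {..<length x}"
      using insert.prems by (simp add: block_family_def)
    have disj: "B \<inter> C = {}" if "B \<in> Cs" for B
      using block_family_disjoint[OF insert.prems] that insert.hyps(2) by blast
    have "bias B (flip C x) = bias B x" if "B \<in> Cs" for B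
      using fam disj[OF that] that by (simp add: block_family_def bias_flip_disjoint)
    then have "(\<Sum>B\<in>Cs. bias B (flip C x)) = (\<Sum>B\<in>Cs. bias B x)"
      by simp
    moreover have "(\<Sum>X\<in>#cube x (insert C Cs). excess X) =
        (\<Sum>X\<in>#cube x Cs. excess X) + (\<Sum>X\<in>#cube (flip C x) Cs. excess X)"
      using cube_insert[OF insert.hyps] disj by simp
    ultimately show ?case
      using insert.IH[OF fam] insert.IH[of "flip C x"] fam insert.hyps C
      by (simp add: excess_flip algebra_simps)
  qed
qed

lemma excess_flip_Union:
  assumes fam: "block_family (length X) Cs" and "D \<subseteq> Cs"
  shows "excess (flip (\<Union>D) X) = excess X - 2 * (\<Sum>C\<in>D. bias C X)"
proof -
  have fam_D: "block_family (length X) D"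
    using fam \<open>D \<subseteq> Cs\<close> by (rule block_family_subset)
  then have "\<forall>C\<in>D. finite C" "\<forall>A\<in>D. \<forall>B\<in>D. A \<noteq> B \<longrightarrow> A \<inter> B = {}"
    by (auto simp: block_family_def pairwise_def disjnt_def intro: finite_block)
  then have "bias (\<Union>D) X = (\<Sum>C\<in>D. bias C X)"
    unfolding bias_def by (simp add: sum.Union_disjoint)
  moreover have "\<Union>D \<subseteq> {..<length X}"
    using fam_D by (auto simp: block_family_def)
  ultimately show ?thesis
    by (simp add: excess_flip)
qed

lemma excess_center_bound:
  assumes fam: "block_family (length x) Cs" and sign: "\<forall>X\<in>#cube x Cs. 0 \<le> spin v * excess X"
  shows "(\<Sum>C\<in>Cs. \<bar>bias C x\<bar>) \<le> spin v * (excess x - (\<Sum>C\<in>Cs. bias C x))"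
proof -
  define s where "s = spin v"
  \<comment> \<open>flipping exactly these blocks gives the point of the cube minimising \<open>s * excess\<close>\<close>
  define D where "D = {C \<in> Cs. 0 < s * bias C x}"
  have fin: "finite Cs"
    using fam by (simp add: block_family_def)
  have "D \<subseteq> Cs"
    by (auto simp: D_def)
  then have "flip (\<Union>D) x \<in># cube x Cs"
    using fin by (auto simp: mem_cube)
  then have "0 \<le> s * excess (flip (\<Union>D) x)"
    using sign by (simp add: s_def)
  then have "0 \<le> s * excess x - 2 * (\<Sum>C\<in>D. s * bias C x)"
    using excess_flip_Union[OF fam \<open>D \<subseteq> Cs\<close>]
    by (simp add: sum_distrib_left right_diff_distrib mult.left_commute)
  moreover have "\<bar>bias C x\<bar> = (if C \<in> D then s * bias C x else - (s * bias C x))" if "C \<in> Cs" for C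
    using that by (auto simp: D_def s_def spin_def)
  then have "(\<Sum>C\<in>Cs. \<bar>bias C x\<bar>) = (\<Sum>C\<in>D. s * bias C x) - (\<Sum>C\<in>Cs - D. s * bias C x)"
    using fin by (simp add: sum.If_cases Int_absorb1 \<open>D \<subseteq> Cs\<close> Diff_eq sum_negf)
  moreover have "(\<Sum>C\<in>Cs. s * bias C x) = (\<Sum>C\<in>D. s * bias C x) + (\<Sum>C\<in>Cs - D. s * bias C x)"
    using fin \<open>D \<subseteq> Cs\<close> by (metis sum.subset_diff add.commute)
  ultimately show ?thesis
    unfolding s_def[symmetric] by (simp add: sum_distrib_left right_diff_distrib)
qed

lemma cube_majority_constant:
  assumes fam: "block_family (length x) Cs" and maj: "\<forall>X\<in>#cube x Cs. majority X = v"
  shows "int (size (cube x Cs)) * int (unbalanced Cs x) \<le> (\<Sum>X\<in>#cube x Cs. \<bar>excess X\<bar>)"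
proof -
  have fin: "finite Cs"
    using fam by (simp add: block_family_def)
  have sign: "\<forall>X\<in>#cube x Cs. 0 \<le> spin v * excess X"
    using maj by (auto simp: majority_iff_excess spin_def)
  have "int (unbalanced Cs x) \<le> (\<Sum>C\<in>Cs. \<bar>bias C x\<bar>)"
  proof -
    have "int (unbalanced Cs x) = (\<Sum>C\<in>{C \<in> Cs. bias C x \<noteq> 0}. 1)"
      by (simp add: unbalanced_def)
    also have "\<dots> \<le> (\<Sum>C\<in>{C \<in> Cs. bias C x \<noteq> 0}. \<bar>bias C x\<bar>)"
      by (intro sum_mono) auto
    also have "\<dots> \<le> (\<Sum>C\<in>Cs. \<bar>bias C x\<bar>)"
      using fin by (intro sum_mono2) auto
    finally show ?thesis .
  qed
  also have "\<dots> \<le> spin v * (excess x - (\<Sum>C\<in>Cs. bias C x))"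
    using fam sign by (rule excess_center_bound)
  finally have "int (unbalanced Cs x) \<le> spin v * (excess x - (\<Sum>C\<in>Cs. bias C x))" .
  then have "2 ^ card Cs * int (unbalanced Cs x) \<le> 2 ^ card Cs * (spin v * (excess x - (\<Sum>C\<in>Cs. bias C x)))"
    by (intro mult_left_mono) auto
  then have "int (size (cube x Cs)) * int (unbalanced Cs x)
      \<le> spin v * (\<Sum>X\<in>#cube x Cs. excess X)"
    using fin by (simp add: sum_excess_cube[OF fam] size_cube algebra_simps)
  also have "\<dots> = (\<Sum>X\<in>#cube x Cs. spin v * excess X)"
    by (simp add: sum_mset_distrib_left)
  also have "\<dots> = (\<Sum>X\<in>#cube x Cs. \<bar>excess X\<bar>)"
    using sign by (intro arg_cong[where f = sum_mset] image_mset_cong) (auto simp: spin_def)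
  finally show ?thesis .
qed

definition cost_invariant :: "xtree \<Rightarrow> bool list \<Rightarrow> nat set set \<Rightarrow> bool" where
  "cost_invariant T x Cs \<longleftrightarrow>
     2 * (int (size (cube x Cs)) * int (unbalanced Cs x) - (\<Sum>X\<in>#cube x Cs. \<bar>excess X\<bar>))
       \<le> 3 * (\<Sum>X\<in>#cube x Cs. int (cost T X))"

lemma sum_cost_Node:
  assumes "\<forall>X\<in>#Q. answer q X = v"
  shows "(\<Sum>X\<in>#Q. int (cost (Node q t0 t1) X)) = int (size Q) + (\<Sum>X\<in>#Q. int (cost (if v then t1 else t0) X))"
  using assms by (induction Q) auto

lemma cost_invariant_Node_fixed:
  assumes "\<forall>X\<in>#cube x Cs. answer q X = v" "cost_invariant (if v then t1 else t0) x Cs"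
  shows "cost_invariant (Node q t0 t1) x Cs"
  using assms sum_cost_Node[OF assms(1)] by (simp add: cost_invariant_def del: cost.simps)

lemma cost_invariant_Node_split:
  assumes split: "cube x Cs = cube x Cs' + cube x' Cs'" and "finite Cs'"
    and ans: "\<forall>X\<in>#cube x Cs'. answer q X = v" "\<forall>X\<in>#cube x' Cs'. answer q X = (\<not> v)"
    and inv: "cost_invariant (if v then t1 else t0) x Cs'" "cost_invariant (if v then t0 else t1) x' Cs'"
    and unb: "2 * unbalanced Cs x \<le> 3 + unbalanced Cs' x + unbalanced Cs' x'"
  shows "cost_invariant (Node q t0 t1) x Cs"
proof -
  define S where "S = int (size (cube x Cs'))"
  have size: "int (size (cube x' Cs')) = S" "int (size (cube x Cs)) = 2 * S"
    using split \<open>finite Cs'\<close> by (simp_all add: S_def size_cube)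
  have sums: "(\<Sum>X\<in>#cube x Cs. f X) = (\<Sum>X\<in>#cube x Cs'. f X) + (\<Sum>X\<in>#cube x' Cs'. f X)"
    for f :: "bool list \<Rightarrow> int"
    by (simp add: split)
  have "S * (2 * int (unbalanced Cs x)) \<le> S * (3 + int (unbalanced Cs' x) + int (unbalanced Cs' x'))"
    using unb by (intro mult_left_mono) (auto simp: S_def)
  then show ?thesis
    using inv sum_cost_Node[OF ans(1), of t0 t1] sum_cost_Node[OF ans(2), of t0 t1]
    unfolding cost_invariant_def sums size S_def[symmetric]
    by (cases v) (simp_all del: cost.simps add: algebra_simps)
qed

lemma cost_invariant_if_correct:
  assumes "valid_tree N T" "block_family N Cs" "length x = N" "\<forall>X\<in>#cube x Cs. run T X = majority X"
  shows "cost_invariant T x Cs"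
  using assms
proof (induction T arbitrary: x Cs)
  case (Leaf v)
  then show ?case
    using cube_majority_constant[of x Cs v] by (simp add: cost_invariant_def)
next
  case (Node q t0 t1)
  have q: "query_ok N q"
    using Node.prems(1) by simp
  have child: "cost_invariant (if v then t1 else t0) y Cs'"
    if "block_family N Cs'" "length y = N" "\<forall>X\<in>#cube y Cs'. answer q X = v"
      "\<forall>X\<in>#cube y Cs'. run (Node q t0 t1) X = majority X" for Cs' y v
    using Node.IH Node.prems(1) that by auto
  show ?case
  proof (cases "query_fixed Cs q")
    case True
    then have ans: "\<forall>X\<in>#cube x Cs. answer q X = answer q x"
      using Node.prems(2,3) q answer_cube by (auto simp: block_family_def)
    show ?thesis
      using ans child[OF Node.prems(2,3) ans Node.prems(4)] by (rule cost_invariant_Node_fixed)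
  next
    case False
    obtain Cs' x' where fam': "block_family N Cs'" and len': "length x' = N"
      and split: "cube x Cs = cube x Cs' + cube x' Cs'" and fixed: "query_fixed Cs' q"
      and flipped: "answer q x' = (\<not> answer q x)"
      and unb: "2 * unbalanced Cs x \<le> 3 + unbalanced Cs' x + unbalanced Cs' x'"
      using cube_split_by_query[OF Node.prems(2,3) q False] by blast
    have fin: "finite Cs'"
      using fam' by (simp add: block_family_def)
    have ans: "\<forall>X\<in>#cube x Cs'. answer q X = answer q x" "\<forall>X\<in>#cube x' Cs'. answer q X = (\<not> answer q x)"
      using answer_cube[OF fin fixed, of x] answer_cube[OF fin fixed, of x'] q Node.prems(3) len' flipped
      by auto
    have correct: "\<forall>X\<in>#cube x Cs'. run (Node q t0 t1) X = majority X"
      "\<forall>X\<in>#cube x' Cs'. run (Node q t0 t1) X = majority X"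
      using Node.prems(4) unfolding split by simp_all
    show ?thesis
      using child[OF fam' Node.prems(3) ans(1) correct(1)] child[OF fam' len' ans(2) correct(2)]
      by (intro cost_invariant_Node_split[OF split fin ans _ _ unb]) auto
  qed
qed

section \<open>Central binomial coefficients and the mean absolute excess\<close>

lemma central_binomial_Suc: "(2 * Suc m choose Suc m) * Suc m = 2 * (2 * m + 1) * (2 * m choose m)"
proof -
  define A B C where "A = Suc (Suc (2 * m)) choose Suc m" and "B = Suc (2 * m) choose Suc m"
    and "C = 2 * m choose m"
  have "Suc m * A = Suc (Suc (2 * m)) * (Suc (2 * m) choose m)"
    unfolding A_def by (rule Suc_times_binomial)
  also have "Suc (2 * m) choose m = B"
    unfolding B_def using binomial_symmetric[of m "Suc (2 * m)"] by simp
  finally have "Suc m * A = Suc m * (2 * B)"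
    by simp
  then have "A = 2 * B"
    by (simp only: mult_left_cancel[OF nat.distinct(2)])
  then have "A * Suc m = 2 * (Suc m * B)"
    by simp
  also have "Suc m * B = Suc (2 * m) * C"
    unfolding B_def C_def by (rule Suc_times_binomial)
  finally show ?thesis
    by (simp add: A_def C_def)
qed

lemma central_binomial_Suc_real:
  "real (2 * Suc n choose Suc n) = 2 * (2 * real n + 1) * real (2 * n choose n) / (real n + 1)"
proof -
  have "real ((2 * Suc n choose Suc n) * Suc n) = real (2 * (2 * n + 1) * (2 * n choose n))"
    using central_binomial_Suc[of n] by (rule arg_cong)
  then show ?thesis
    unfolding of_nat_mult by (simp add: field_simps)
qed

lemma wallis_partial_product:
  "(\<Prod>k=1..n. 4 * real k ^ 2 / (4 * real k ^ 2 - 1)) = 16 ^ n / ((2 * n + 1) * real (2 * n choose n) ^ 2)"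
proof (induction n)
  case 0
  then show ?case
    by simp
next
  case (Suc n)
  define C a b d where "C = real (2 * n choose n)" and "a = 2 * real n + 1" and "b = real n + 1"
    and "d = 2 * real n + 3"
  have pos: "C > 0" "a > 0" "b > 0" "d > 0"
    by (simp_all add: C_def a_def b_def d_def)
  have "4 * real (Suc n) ^ 2 / (4 * real (Suc n) ^ 2 - 1) = 4 * b ^ 2 / (a * d)"
    by (simp add: a_def b_def d_def algebra_simps power2_eq_square)
  then have "(\<Prod>k=1..Suc n. 4 * real k ^ 2 / (4 * real k ^ 2 - 1)) = 16 ^ n / (a * C ^ 2) * (4 * b ^ 2 / (a * d))"
    using Suc by (simp add: prod.nat_ivl_Suc' C_def a_def)
  also have "\<dots> = 16 ^ Suc n / (d * (2 * a * C / b) ^ 2)"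
    using pos by (simp add: field_simps power2_eq_square)
  finally show ?case
    unfolding central_binomial_Suc_real by (simp add: C_def a_def b_def d_def add.commute)
qed

lemma central_binomial_quotient_Suc_le:
  assumes "1 \<le> n"
  shows "16 ^ Suc n / (2 * real (Suc n) * real (2 * Suc n choose Suc n) ^ 2)
    \<le> 16 ^ n / (2 * real n * real (2 * n choose n) ^ 2)"
proof -
  define Q C a b where "Q = 16 ^ n / (2 * real n * real (2 * n choose n) ^ 2)"
    and "C = real (2 * n choose n)" and "a = 2 * real n + 1" and "b = real n + 1"
  have pos: "C > 0" "a > 0" "b > 0" "real n > 0"
    using assms by (simp_all add: C_def a_def b_def)
  have "real (Suc n) = b"
    by (simp add: b_def)
  then have "16 ^ Suc n / (2 * real (Suc n) * real (2 * Suc n choose Suc n) ^ 2) = Q * (4 * real n * b / a ^ 2)"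
    unfolding Q_def central_binomial_Suc_real C_def[symmetric] a_def[symmetric] b_def[symmetric]
    using pos by (simp add: field_simps power2_eq_square)
  also have "\<dots> \<le> Q * 1"
  proof (intro mult_left_mono)
    have "4 * real n * b \<le> a ^ 2"
      by (simp add: a_def b_def power2_eq_square algebra_simps)
    then show "4 * real n * b / a ^ 2 \<le> 1"
      using pos by simp
  qed (simp add: Q_def)
  finally show ?thesis
    by (simp add: Q_def)
qed

lemma central_binomial_sq_le:
  assumes "1 \<le> m"
  shows "pi * m * real (2 * m choose m) ^ 2 \<le> 16 ^ m"
proof -
  define Q where "Q n = 16 ^ n / (2 * real n * real (2 * n choose n) ^ 2)" for n
  have Q_antimono: "Q k \<le> Q m" if "m \<le> k" for k
    using that
  proof (induction k rule: dec_induct)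
    case (step k)
    then show ?case
      using central_binomial_quotient_Suc_le[of k] assms unfolding Q_def by linarith
  qed simp
  have wallis_le_Q: "(\<Prod>k=1..n. 4 * real k ^ 2 / (4 * real k ^ 2 - 1)) \<le> Q n" if "1 \<le> n" for n
    unfolding wallis_partial_product Q_def using that by (intro divide_left_mono mult_right_mono mult_pos_pos) auto
  have "pi / 2 \<le> Q m"
  proof (rule LIMSEQ_le_const2[OF wallis], intro exI allI impI)
    fix n
    assume "m \<le> n"
    then show "(\<Prod>k=1..n. 4 * real k ^ 2 / (4 * real k ^ 2 - 1)) \<le> Q m"
      using wallis_le_Q[of n] Q_antimono[of n] assms by linarith
  qed
  then show ?thesis
    using assms by (simp add: Q_def field_simps)
qed

lemma central_binomial_le: "2 * m * real (2 * m choose m) \<le> 4 ^ m * sqrt (4 * real m / pi)"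
proof -
  define C where "C = real (2 * m choose m)"
  have "real m * (pi * m * C ^ 2) \<le> real m * 16 ^ m"
  proof (cases "m = 0")
    case False
    then show ?thesis
      unfolding C_def by (intro mult_left_mono central_binomial_sq_le) auto
  qed simp
  then have "(2 * real m * C) ^ 2 \<le> 16 ^ m * (4 * real m / pi)"
    using pi_gt_zero by (simp add: field_simps power2_eq_square)
  also have "\<dots> = (4 ^ m) ^ 2 * sqrt (4 * real m / pi) ^ 2"
    by (simp add: power2_eq_square flip: power_mult_distrib)
  also have "\<dots> = (4 ^ m * sqrt (4 * real m / pi)) ^ 2"
    by (simp only: power_mult_distrib)
  finally show ?thesis
    unfolding C_def by (rule power2_le_imp_le) simp
qed

definition abs_excess_sum :: "nat \<Rightarrow> int" where
  "abs_excess_sum N = (\<Sum>U\<in>Pow {..<N}. \<bar>2 * int (card U) - int N\<bar>)"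

lemma abs_excess_sum_Suc:
  "abs_excess_sum (Suc N) = 2 * abs_excess_sum N + (if even N then 2 * int (N choose (N div 2)) else 0)"
proof -
  define s where "s U = 2 * int (card U) - int N" for U :: "nat set"
  have "abs_excess_sum (Suc N) = (\<Sum>U\<in>Pow {..<N}. \<bar>s U - 1\<bar> + \<bar>s U + 1\<bar>)"
  proof -
    have "\<bar>2 * int (card (insert N U)) - int (Suc N)\<bar> = \<bar>s U + 1\<bar>" if "U \<in> Pow {..<N}" for U
    proof -
      have "finite U" "N \<notin> U"
        using that finite_subset by auto
      then show ?thesis
        by (simp add: s_def)
    qed
    then show ?thesis
      unfolding abs_excess_sum_def lessThan_Suc
      by (simp add: sum_Pow_insert sum.distrib s_def algebra_simps)
  qed
  also have "\<dots> = (\<Sum>U\<in>Pow {..<N}. 2 * \<bar>s U\<bar> + (if s U = 0 then 2 else 0))"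
    by (intro sum.cong) auto
  also have "\<dots> = 2 * abs_excess_sum N + 2 * int (card {U \<in> Pow {..<N}. s U = 0})"
    by (simp add: abs_excess_sum_def s_def sum.distrib sum_distrib_left sum.If_cases Int_def)
  also have "{U \<in> Pow {..<N}. s U = 0} = (if even N then {U. U \<subseteq> {..<N} \<and> card U = N div 2} else {})"
    by (auto simp: s_def; presburger)
  finally show ?thesis
    by (simp add: n_subsets)
qed

lemma abs_excess_sum_even: "abs_excess_sum (2 * m) = int (2 * m * (2 * m choose m))"
  and abs_excess_sum_odd: "abs_excess_sum (Suc (2 * m)) = int (2 * (2 * m + 1) * (2 * m choose m))"
proof -
  have odd_from_even: "abs_excess_sum (Suc (2 * k)) = int (2 * (2 * k + 1) * (2 * k choose k))"
    if "abs_excess_sum (2 * k) = int (2 * k * (2 * k choose k))" for k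
    using that by (simp add: abs_excess_sum_Suc algebra_simps)
  show even: "abs_excess_sum (2 * m) = int (2 * m * (2 * m choose m))"
  proof (induction m)
    case 0
    then show ?case
      by (simp add: abs_excess_sum_def)
  next
    case (Suc m)
    have "abs_excess_sum (2 * Suc m) = 2 * int (2 * (2 * m + 1) * (2 * m choose m))"
      using odd_from_even[OF Suc] by (simp add: abs_excess_sum_Suc)
    also have "\<dots> = int (2 * Suc m * (2 * Suc m choose Suc m))"
      using central_binomial_Suc[of m] by (simp only: mult.assoc mult.commute[of "Suc m"] of_nat_mult)
    finally show ?case .
  qed
  then show "abs_excess_sum (Suc (2 * m)) = int (2 * (2 * m + 1) * (2 * m choose m))"
    by (rule odd_from_even)
qed

lemma abs_excess_sum_le: "real_of_int (abs_excess_sum N) \<le> 2 ^ N * (sqrt (2 * real N / pi) + 1)"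
proof (cases "even N")
  case True
  then obtain m where N: "N = 2 * m"
    by blast
  have "real_of_int (abs_excess_sum N) \<le> 2 ^ N * sqrt (2 * real N / pi)"
    using central_binomial_le[of m] by (simp add: N abs_excess_sum_even power_mult)
  moreover have "0 \<le> (2::real) ^ N"
    by simp
  ultimately show ?thesis
    unfolding distrib_left mult_1_right by linarith
next
  case False
  then obtain m where N: "N = Suc (2 * m)"
    using oddE by fastforce
  define C where "C = real (2 * m choose m)"
  have "C \<le> 4 ^ m"
    using binomial_le_pow2[of "2 * m" m] by (simp add: C_def power_mult flip: of_nat_le_iff)
  moreover have "sqrt (4 * real m / pi) \<le> sqrt (2 * real N / pi)"
    by (simp add: N divide_right_mono)
  moreover have "2 * real m * C \<le> 4 ^ m * sqrt (4 * real m / pi)"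
    unfolding C_def by (rule central_binomial_le)
  moreover have "real_of_int (abs_excess_sum N) = 2 * (2 * real m * C) + 2 * C"
    unfolding N abs_excess_sum_odd by (simp add: C_def algebra_simps)
  moreover have "4 ^ m * sqrt (4 * real m / pi) \<le> 4 ^ m * sqrt (2 * real N / pi)"
    using \<open>sqrt (4 * real m / pi) \<le> sqrt (2 * real N / pi)\<close> by (rule mult_left_mono) simp
  ultimately have "real_of_int (abs_excess_sum N) \<le> 2 * (4 ^ m * sqrt (2 * real N / pi)) + 2 * 4 ^ m"
    by linarith
  moreover have "(2::real) ^ N = 2 * 4 ^ m"
    unfolding N power_Suc power_mult by simp
  ultimately show ?thesis
    by (simp add: algebra_simps)
qed

lemma cube_singletons:
  assumes "finite I"
  shows "cube x ((\<lambda>i. {i}) ` I) = image_mset (\<lambda>U. flip U x) (mset_set (Pow I))"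
proof -
  have "inj_on (\<lambda>i. {i}) I"
    by (simp add: inj_on_def)
  then have "mset_set (Pow ((\<lambda>i. {i}) ` I)) = image_mset (image (\<lambda>i. {i})) (mset_set (Pow I))"
    by (simp add: image_mset_mset_set inj_on_image_Pow image_Pow_surj)
  then show ?thesis
    by (simp add: cube_def multiset.map_comp comp_def)
qed

lemma bias_replicate_False:
  assumes "C \<subseteq> {..<N}"
  shows "bias C (replicate N False) = - int (card C)"
proof -
  have "bias C (replicate N False) = (\<Sum>i\<in>C. - 1)"
    unfolding bias_def using assms by (intro sum.cong) (auto simp: spin_def)
  then show ?thesis
    by simp
qed

lemma excess_flip_replicate:
  assumes "U \<subseteq> {..<N}"
  shows "excess (flip U (replicate N False)) = 2 * int (card U) - int N"
proof -
  have "excess (flip U (replicate N False)) = excess (replicate N False) - 2 * bias U (replicate N False)"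
    using assms by (simp add: excess_flip)
  then show ?thesis
    using assms by (simp add: excess_def bias_replicate_False)
qed

lemma hypercube_cost_bound:
  assumes "valid_tree N T" and correct: "\<forall>X. length X = N \<longrightarrow> run T X = majority X"
  shows "2 * (2 ^ N * int N - abs_excess_sum N)
    \<le> 3 * (\<Sum>U\<in>Pow {..<N}. int (cost T (flip U (replicate N False))))"
proof -
  define Cs where "Cs = (\<lambda>i. {i}) ` {..<N}"
  define x where "x = replicate N False"
  have fam: "block_family N Cs"
    by (auto simp: block_family_def Cs_def pairwise_def disjnt_def)
  have cube: "cube x Cs = image_mset (\<lambda>U. flip U x) (mset_set (Pow {..<N}))"
    unfolding Cs_def by (simp add: cube_singletons)
  have "{C \<in> Cs. bias C x \<noteq> 0} = Cs"
    by (auto simp: Cs_def x_def bias_replicate_False)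
  then have "unbalanced Cs x = N"
    by (simp add: unbalanced_def Cs_def card_image)
  moreover have "size (cube x Cs) = 2 ^ N"
    by (simp add: cube card_Pow)
  moreover have "(\<Sum>X\<in>#cube x Cs. \<bar>excess X\<bar>) = abs_excess_sum N"
    unfolding cube abs_excess_sum_def sum_unfold_sum_mset multiset.map_comp
    by (intro arg_cong[where f = sum_mset] image_mset_cong) (simp add: x_def excess_flip_replicate)
  moreover have "(\<Sum>X\<in>#cube x Cs. int (cost T X)) = (\<Sum>U\<in>Pow {..<N}. int (cost T (flip U x)))"
    by (simp add: cube sum_unfold_sum_mset multiset.map_comp comp_def)
  moreover have "\<forall>X\<in>#cube x Cs. run T X = majority X"
    using correct by (auto simp: x_def mem_cube[OF finite_imageI[OF finite_lessThan]] Cs_def)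
  ultimately show ?thesis
    using cost_invariant_if_correct[OF assms(1) fam, of x] by (simp add: x_def cost_invariant_def)
qed

section \<open>Randomized trees\<close>

lemma exists_ge_average:
  fixes f :: "'a \<Rightarrow> ennreal"
  assumes fin: "finite I" and ne: "I \<noteq> {}" and sum: "ennreal (real (card I) * r) \<le> (\<Sum>i\<in>I. f i)"
  shows "\<exists>i\<in>I. ennreal r \<le> f i"
proof (rule ccontr)
  assume "\<not> (\<exists>i\<in>I. ennreal r \<le> f i)"
  then have less: "f i < ennreal r" if "i \<in> I" for i
    using that by (simp add: not_le)
  have "Max (f ` I) \<in> f ` I"
    using fin ne by simp
  then obtain m where "m \<in> I" "f m = Max (f ` I)"
    by auto
  then have "(\<Sum>i\<in>I. f i) \<le> of_nat (card I) * f m"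
    using fin by (intro sum_bounded_above) simp
  also have "\<dots> < of_nat (card I) * ennreal r"
    using less[OF \<open>m \<in> I\<close>] fin ne
    by (intro ennreal_mult_strict_left_mono) (auto simp: card_gt_0_iff of_nat_less_top)
  also have "\<dots> = ennreal (real (card I) * r)"
    using less[OF \<open>m \<in> I\<close>]
    by (cases "r \<le> 0") (auto simp: ennreal_mult ennreal_of_nat_eq_real_of_nat ennreal_neg)
  finally show False
    using sum by simp
qed

lemma expected_cost_sum_ge:
  assumes "finite I" and bound: "\<forall>T\<in>set_pmf D. B \<le> (\<Sum>i\<in>I. real (cost T (X i)))"
  shows "ennreal B \<le> (\<Sum>i\<in>I. expected_cost D (X i))"
proof -
  have "ennreal B = (\<integral>\<^sup>+ T. ennreal B \<partial>measure_pmf D)"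
    by (simp add: measure_pmf.emeasure_space_1)
  also have "\<dots> \<le> (\<integral>\<^sup>+ T. ennreal (\<Sum>i\<in>I. real (cost T (X i))) \<partial>measure_pmf D)"
    using bound by (intro nn_integral_mono_AE) (auto simp: AE_measure_pmf_iff intro: ennreal_leI)
  also have "\<dots> = (\<integral>\<^sup>+ T. (\<Sum>i\<in>I. ennreal (real (cost T (X i)))) \<partial>measure_pmf D)"
    by (intro nn_integral_cong) (simp add: sum_ennreal)
  also have "\<dots> = (\<Sum>i\<in>I. expected_cost D (X i))"
    unfolding expected_cost_def by (rule nn_integral_sum) simp
  finally show ?thesis .
qed

lemma rand_computes_exactly_support:
  assumes "rand_computes_exactly N D f" "T \<in> set_pmf D"
  shows "valid_tree N T" "\<forall>X. length X = N \<longrightarrow> run T X = f X"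
proof -
  show "valid_tree N T"
    using assms unfolding rand_computes_exactly_def by blast
  show "\<forall>X. length X = N \<longrightarrow> run T X = f X"
  proof (intro allI impI)
    fix X :: "bool list"
    assume "length X = N"
    then have "measure_pmf.prob D {T. run T X = f X} = 1"
      using assms(1) unfolding rand_computes_exactly_def by blast
    then have "AE T in measure_pmf D. run T X = f X"
      using measure_pmf.AE_prob_1 by force
    then show "run T X = f X"
      using assms(2) by (simp add: AE_measure_pmf_iff)
  qed
qed

lemma expected_cost_hypercube_sum:
  assumes "rand_computes_exactly N D majority"
  shows "ennreal (2 * (2 ^ N * real N - real_of_int (abs_excess_sum N)) / 3)
    \<le> (\<Sum>U\<in>Pow {..<N}. expected_cost D (flip U (replicate N False)))"
proof (rule expected_cost_sum_ge, simp, intro ballI)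
  fix T
  assume "T \<in> set_pmf D"
  then have "2 * (2 ^ N * int N - abs_excess_sum N)
      \<le> 3 * (\<Sum>U\<in>Pow {..<N}. int (cost T (flip U (replicate N False))))"
    using hypercube_cost_bound rand_computes_exactly_support[OF assms] by blast
  then have "real_of_int (2 * (2 ^ N * int N - abs_excess_sum N))
      \<le> real_of_int (3 * (\<Sum>U\<in>Pow {..<N}. int (cost T (flip U (replicate N False)))))"
    by (simp only: of_int_le_iff)
  then show "2 * (2 ^ N * real N - real_of_int (abs_excess_sum N)) / 3
      \<le> (\<Sum>U\<in>Pow {..<N}. real (cost T (flip U (replicate N False))))"
    by simp
qed

lemma abs_excess_sum_average_bound:
  "2 ^ N * (2/3 * real N - sqrt (8 * real N / (9 * pi)) - 1)
    \<le> 2 * (2 ^ N * real N - real_of_int (abs_excess_sum N)) / 3"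
proof -
  have "sqrt (8 * real N / (9 * pi)) = sqrt ((2/3) ^ 2) * sqrt (2 * real N / pi)"
    unfolding real_sqrt_mult[symmetric] by (simp add: field_simps power2_eq_square)
  then have "2 ^ N * (2/3 * real N - sqrt (8 * real N / (9 * pi)) - 1)
      = 2/3 * (2 ^ N * real N) - 2/3 * (2 ^ N * sqrt (2 * real N / pi)) - 2 ^ N"
    by (simp add: algebra_simps)
  moreover have "real_of_int (abs_excess_sum N) \<le> 2 ^ N * sqrt (2 * real N / pi) + 2 ^ N"
    using abs_excess_sum_le[of N] by (simp add: algebra_simps)
  moreover have "2 * (2 ^ N * real N - real_of_int (abs_excess_sum N)) / 3
      = 2/3 * (2 ^ N * real N) - 2/3 * real_of_int (abs_excess_sum N)"
    by simp
  moreover have "0 \<le> (2::real) ^ N"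
    by simp
  ultimately show ?thesis
    by linarith
qed

theorem mainTheorem13:
  shows "\<exists>d::real. \<forall>N::nat. \<forall>D::xtree pmf. N \<ge> 1 \<longrightarrow> rand_computes_exactly N D majority \<longrightarrow>
     (\<exists>X. length X = N \<and>
        expected_cost D X \<ge> ennreal (2/3 * real N - sqrt (8 * real N / (9 * pi)) - d))"
proof (intro exI[of _ 1] allI impI)
  fix N :: nat and D :: "xtree pmf"
  define r where "r = 2/3 * real N - sqrt (8 * real N / (9 * pi)) - 1"
  assume "rand_computes_exactly N D majority"
  have "ennreal (real (card (Pow {..<N})) * r)
      \<le> ennreal (2 * (2 ^ N * real N - real_of_int (abs_excess_sum N)) / 3)"
    using abs_excess_sum_average_bound[of N] by (intro ennreal_leI) (simp add: r_def card_Pow mult.commute)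
  also have "\<dots> \<le> (\<Sum>U\<in>Pow {..<N}. expected_cost D (flip U (replicate N False)))"
    using \<open>rand_computes_exactly N D majority\<close> by (rule expected_cost_hypercube_sum)
  finally have "ennreal (real (card (Pow {..<N})) * r)
      \<le> (\<Sum>U\<in>Pow {..<N}. expected_cost D (flip U (replicate N False)))" .
  then obtain U where "ennreal r \<le> expected_cost D (flip U (replicate N False))"
    using exists_ge_average[of "Pow {..<N}"] by blast
  then show "\<exists>X. length X = N \<and> ennreal (2/3 * real N - sqrt (8 * real N / (9 * pi)) - 1) \<le> expected_cost D X"
    unfolding r_def by (metis length_flip length_replicate)
qed

end
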